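(* Let $\mathcal{C}=(V,\mathcal{R})$ be a coherent configuration with fibers $X,Y$ such that $m=|X|=|Y|$ is a prime, $r=|\mathcal{R}_X|>2$ and $|\mathcal{R}_{X,Y}|>1$, and let $k=\frac{m-1}{r-1}$. If $(k,m)=(44,89)$, then $1\in\{d_S\mid S\in\mathcal{R}_{X,Y}\}$.
   Context: A coherent configuration is a pair $\mathcal{C}=(V,\mathcal{R})$ where $V$ is a finite set and $\mathcal{R}$ is a partition of $V\times V$ into nonempty sets such that: (1) the diagonal $\Delta_V$ is a union of members of $\mathcal{R}$; (2) for each $R\in\mathcal{R}$ its transpose $R^t=\{(u,v)\mid (v,u)\in R\}$ belongs to $\mathcal{R}$; (3) for all $R,S,T\in\mathcal{R}$ there is a constant $c_{RS}^T$ with $c_{RS}^T=|R(u)\cap S^t(v)|$ for all $(u,v)\in T$, where $T(w)=\{z\in V\mid (w,z)\in T\}$. A subset $X\subseteq V$ is a fiber if $\Delta_X\in\mathcal{R}$. For fibers $X,Y$, $\mathcal{R}_{X,Y}=\{R\in\mathcal{R}\mid R\subseteq X\times Y\}$, $\mathcal{R}_X=\mathcal{R}_{X,X}$, and for $R\in\mathcal{R}_{X,Y}$, $d_R=c_{RR^t}^{\Delta_X}=|R(x)|$ for any $x\in X$. *)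

theory Defs
  imports Complex_Main "HOL-Library.Disjoint_Sets" "HOL-Computational_Algebra.Primes"
begin

definition coherent_configuration :: "'a set \<Rightarrow> ('a \<times> 'a) set set \<Rightarrow> bool" where
  "coherent_configuration V \<R> \<longleftrightarrow>
     finite V \<and>
     partition_on (V \<times> V) \<R> \<and>
     Id_on V = \<Union>{S \<in> \<R>. S \<subseteq> Id_on V} \<and>
     (\<forall>S\<in>\<R>. S\<inverse> \<in> \<R>) \<and>
     (\<forall>R\<in>\<R>. \<forall>S\<in>\<R>. \<forall>T\<in>\<R>. \<exists>c::nat. \<forall>(u,v)\<in>T.
        card (R `` {u} \<inter> (S\<inverse>) `` {v}) = c)"

definition fiber :: "('a \<times> 'a) set set \<Rightarrow> 'a set \<Rightarrow> bool" where
  "fiber \<R> X \<longleftrightarrow> Id_on X \<in> \<R>"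

definition rels_between :: "('a \<times> 'a) set set \<Rightarrow> 'a set \<Rightarrow> 'a set \<Rightarrow> ('a \<times> 'a) set set" where
  "rels_between \<R> X Y = {S \<in> \<R>. S \<subseteq> X \<times> Y}"

definition intersection_number :: "('a \<times> 'a) set \<Rightarrow> ('a \<times> 'a) set \<Rightarrow> ('a \<times> 'a) set \<Rightarrow> nat" where
  "intersection_number R S T =
     (let (u, v) = (SOME p. p \<in> T) in card (R `` {u} \<inter> (S\<inverse>) `` {v}))"

definition valency :: "'a set \<Rightarrow> ('a \<times> 'a) set \<Rightarrow> nat" where
  "valency X S = intersection_number S (S\<inverse>) (Id_on X)"

end

theory Submission
  imports Defs "HOL-Analysis.Analysis"
begin

text \<open>From \<open>k = 44\<close> and \<open>m = 89\<close> we get \<open>r = 3\<close>, so \<open>\<R>\<^sub>X = {\<Delta>\<^sub>X, A, B}\<close>. Since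
\<open>89 \<equiv> 1 (mod 4)\<close>, \<open>A\<close> cannot be a doubly regular tournament, so \<open>A\<close> is symmetric and
\<open>(X, A)\<close> is a strongly regular graph. The trace of a spectral idempotent of \<open>A\<close> is the
multiplicity of an eigenvalue, hence an integer; for prime order this forces the conference
parameters \<open>(89, 44, 21, 22)\<close>. For \<open>S \<in> \<R>\<^sub>X\<^sub>,\<^sub>Y\<close> with valency \<open>d\<close>, counting gives
\<open>d\<^sup>2 = d + 44(\<alpha> + \<beta>)\<close>, \<open>44\<alpha> = p d\<close>, \<open>44\<beta> = q d\<close>, and positivity of the Gram matrix
\<open>|S(x) \<inter> S(x')|\<close> against both spectral idempotents gives \<open>(2d - \<alpha> - \<beta>)\<^sup>2 \<ge> 89(\<alpha> - \<beta>)\<^sup>2\<close>.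
Together these leave only \<open>d \<in> {1, 89}\<close> or \<open>11 dvd d\<close>. The valencies of \<open>\<R>\<^sub>X\<^sub>,\<^sub>Y\<close> sum to
\<open>89\<close> with at least two summands, so one of them is \<open>1\<close>.\<close>

section \<open>Symmetric idempotent matrices\<close>

lemma symmetric_idempotent_expansion:
  fixes E :: "real^'n^'n"
  assumes sym: "transpose E = E" and idem: "E ** E = E"
    and span: "span B = range ((*v) E)" and orth: "pairwise orthogonal B"
    and nrm: "\<And>b. b \<in> B \<Longrightarrow> norm b = 1" and finB: "finite B"
  shows "E *v v = (\<Sum>b\<in>B. (b \<bullet> v) *\<^sub>R b)"
proof -
  have fixed: "E *v b = b" if b: "b \<in> B" for b
  proof -
    have "b \<in> range ((*v) E)" using span_base[OF b] span by simp
    then obtain u where "b = E *v u" by blast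
    then show ?thesis by (simp add: matrix_vector_mul_assoc idem)
  qed
  have inner_B: "c \<bullet> b = of_bool (c = b)" if "c \<in> B" "b \<in> B" for c b
    using orth that nrm[OF that(1)] by (auto simp: pairwise_def orthogonal_def dot_square_norm)
  define u where "u = E *v v - (\<Sum>b\<in>B. (b \<bullet> v) *\<^sub>R b)"
  have "E *v v \<in> span B" unfolding span by blast
  moreover have "(\<Sum>b\<in>B. (b \<bullet> v) *\<^sub>R b) \<in> span B"
    by (intro span_sum span_scale span_base)
  ultimately have "u \<in> span B" unfolding u_def by (rule span_diff)
  moreover have "orthogonal u c" if "c \<in> B" for c
  proof -
    have "c \<bullet> (E *v v) = (E *v c) \<bullet> v"
      by (metis dot_lmul_matrix sym transpose_matrix_vector)
    also have "\<dots> = c \<bullet> v" using fixed[OF that] by simp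
    finally have "c \<bullet> (E *v v) = c \<bullet> v" .
    moreover have "c \<bullet> (\<Sum>b\<in>B. (b \<bullet> v) *\<^sub>R b) = c \<bullet> v"
      using that finB by (simp add: inner_sum_right inner_B if_distrib cong: if_cong)
    ultimately show ?thesis unfolding u_def orthogonal_def
      by (simp add: inner_diff_right inner_commute)
  qed
  ultimately have "orthogonal u u" by (rule orthogonal_to_span)
  then show ?thesis unfolding u_def by (simp add: orthogonal_self)
qed

lemma trace_symmetric_idempotent:
  fixes E :: "real^'n^'n"
  assumes sym: "transpose E = E" and idem: "E ** E = E"
  shows "trace E = real (dim (range ((*v) E)))"
proof -
  have sub: "subspace (range ((*v) E))"
    by (rule linear_subspace_image[OF matrix_vector_mul_linear subspace_UNIV])
  obtain B where "B \<subseteq> range ((*v) E)" and orth: "pairwise orthogonal B"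
    and nrm: "\<And>x. x \<in> B \<Longrightarrow> norm x = 1" and ind: "independent B"
    and card: "card B = dim (range ((*v) E))" and span: "span B = range ((*v) E)"
    using orthonormal_basis_subspace[OF sub] by blast
  have finB: "finite B" using ind independent_imp_finite by blast
  note expand = symmetric_idempotent_expansion[OF sym idem span orth nrm finB]
  have "trace E = (\<Sum>i\<in>UNIV. (E *v axis i 1) $ i)"
    unfolding trace_def
    by (intro sum.cong refl) (simp add: matrix_vector_mult_def axis_def if_distrib cong: if_cong)
  also have "\<dots> = (\<Sum>i\<in>UNIV. \<Sum>b\<in>B. (b $ i) * (b $ i))"
    by (simp add: expand inner_axis)
  also have "\<dots> = (\<Sum>b\<in>B. b \<bullet> b)"
    by (subst sum.swap) (simp add: inner_vec_def)
  also have "\<dots> = (\<Sum>b\<in>B. 1)"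
    using nrm by (intro sum.cong refl) (simp add: dot_square_norm)
  also have "\<dots> = real (card B)" by simp
  finally show ?thesis using card by simp
qed

text \<open>The type \<open>'n\<close> only indexes the matrix; instantiate it with a numeral type.\<close>

lemma diag_sum_symmetric_idempotent_in_Nats:
  fixes E :: "'a \<Rightarrow> 'a \<Rightarrow> real"
  assumes "finite X" and "card X = CARD('n::finite)"
    and sym: "\<And>x y. x \<in> X \<Longrightarrow> y \<in> X \<Longrightarrow> E x y = E y x"
    and idem: "\<And>x y. x \<in> X \<Longrightarrow> y \<in> X \<Longrightarrow> (\<Sum>z\<in>X. E x z * E z y) = E x y"
  shows "(\<Sum>x\<in>X. E x x) \<in> \<nat>"
proof -
  obtain h :: "'n \<Rightarrow> 'a" where h: "bij_betw h UNIV X"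
    using assms(1,2) by (metis finite finite_same_card_bij)
  have hX: "h i \<in> X" for i using h bij_betwE by blast
  define M :: "real^'n^'n" where "M = (\<chi> i j. E (h i) (h j))"
  have "transpose M = M"
    unfolding M_def transpose_def by (simp add: sym[OF hX hX])
  moreover have "M ** M = M"
  proof -
    have "(\<Sum>k\<in>UNIV. E (h i) (h k) * E (h k) (h j)) = E (h i) (h j)" for i j
      using sum.reindex_bij_betw[OF h, of "\<lambda>z. E (h i) z * E z (h j)"] idem[OF hX hX] by simp
    then show ?thesis by (simp add: M_def matrix_matrix_mult_def vec_eq_iff)
  qed
  ultimately have "trace M = real (dim (range ((*v) M)))"
    by (rule trace_symmetric_idempotent)
  moreover have "trace M = (\<Sum>x\<in>X. E x x)"
    unfolding trace_def M_def using sum.reindex_bij_betw[OF h, of "\<lambda>x. E x x"] by simp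
  ultimately show ?thesis by (metis of_nat_in_Nats)
qed

lemma gram_symmetric_idempotent_nonneg:
  fixes f :: "'a \<Rightarrow> 'b \<Rightarrow> real" and E :: "'a \<Rightarrow> 'a \<Rightarrow> real"
  assumes "finite X"
    and sym: "\<And>x y. x \<in> X \<Longrightarrow> y \<in> X \<Longrightarrow> E x y = E y x"
    and idem: "\<And>x y. x \<in> X \<Longrightarrow> y \<in> X \<Longrightarrow> (\<Sum>z\<in>X. E x z * E z y) = E x y"
  shows "0 \<le> (\<Sum>x\<in>X. \<Sum>x'\<in>X. (\<Sum>y\<in>Y. f x y * f x' y) * E x x')"
proof -
  have "(\<Sum>x\<in>X. \<Sum>x'\<in>X. (\<Sum>y\<in>Y. f x y * f x' y) * E x x')
      = (\<Sum>x\<in>X. \<Sum>x'\<in>X. \<Sum>y\<in>Y. \<Sum>z\<in>X. (f x y * E x z) * (f x' y * E x' z))"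
  proof (intro sum.cong refl)
    fix x x' assume x: "x \<in> X" and x': "x' \<in> X"
    have "E x x' = (\<Sum>z\<in>X. E x z * E z x')" using idem[OF x x'] by simp
    also have "\<dots> = (\<Sum>z\<in>X. E x z * E x' z)" by (intro sum.cong refl) (simp add: sym x')
    finally have "(\<Sum>y\<in>Y. f x y * f x' y) * E x x' = (\<Sum>y\<in>Y. f x y * f x' y) * (\<Sum>z\<in>X. E x z * E x' z)"
      by simp
    then show "(\<Sum>y\<in>Y. f x y * f x' y) * E x x' =
        (\<Sum>y\<in>Y. \<Sum>z\<in>X. (f x y * E x z) * (f x' y * E x' z))"
      by (simp add: sum_distrib_left sum_distrib_right mult_ac)
  qed
  also have "\<dots> = (\<Sum>y\<in>Y. \<Sum>z\<in>X. \<Sum>x\<in>X. \<Sum>x'\<in>X. (f x y * E x z) * (f x' y * E x' z))"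
    by (subst (2) sum.swap, subst sum.swap, subst (2) sum.swap, subst (3) sum.swap) (rule refl)
  also have "\<dots> = (\<Sum>y\<in>Y. \<Sum>z\<in>X. (\<Sum>x\<in>X. f x y * E x z) * (\<Sum>x'\<in>X. f x' y * E x' z))"
    by (simp only: sum_product)
  also have "\<dots> = (\<Sum>y\<in>Y. \<Sum>z\<in>X. (\<Sum>x\<in>X. f x y * E x z)\<^sup>2)"
    by (simp add: power2_eq_square)
  also have "\<dots> \<ge> 0" by (intro sum_nonneg) simp
  finally show ?thesis .
qed

section \<open>Counting and integer arithmetic\<close>

lemma card_eq_sum_card_Image:
  assumes "T \<subseteq> X \<times> Z" "finite X" "finite Z"
  shows "card T = (\<Sum>x\<in>X. card (T``{x}))"
proof -
  have "T = Sigma X (\<lambda>x. T``{x})" using assms(1) by auto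
  moreover have "finite (T``{x})" for x using assms finite_subset[of "T``{x}" Z] by auto
  ultimately show ?thesis using assms(2) by (metis card_SigmaI)
qed

lemma sum_card_Int_Image_swap:
  assumes "finite F" "finite G"
  shows "(\<Sum>x\<in>F. card (G \<inter> S``{x})) = (\<Sum>y\<in>G. card (F \<inter> S\<inverse>``{y}))"
proof -
  have "card (G \<inter> S``{x}) = (\<Sum>y\<in>G. of_bool ((x,y) \<in> S))" for x
    using assms(2) by (simp add: Int_def Image_singleton)
  moreover have "card (F \<inter> S\<inverse>``{y}) = (\<Sum>x\<in>F. of_bool ((x,y) \<in> S))" for y
    using assms(1) by (simp add: Int_def Image_singleton)
  ultimately show ?thesis by (simp only: sum.swap[of _ F])
qed

lemma rational_root_of_int_is_int:
  fixes N z D :: int and w :: real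
  assumes "z \<noteq> 0" "of_int N = of_int z * w" "w\<^sup>2 = of_int D"
  obtains t z' where "0 \<le> t" "t * t = D" "N = z' * t"
proof -
  have "of_int (N\<^sup>2) = (of_int (z\<^sup>2 * D) :: real)"
    using assms(2,3) by (simp add: power_mult_distrib)
  then have N2: "N\<^sup>2 = z\<^sup>2 * D" by (simp only: of_int_eq_iff)
  then have "z\<^sup>2 dvd N\<^sup>2" by simp
  then have "z dvd N" by simp
  then obtain t where t: "N = z * t" by blast
  then have "t * t = D" using N2 assms(1) by (simp add: power2_eq_square algebra_simps)
  show thesis
  proof (cases "0 \<le> t")
    case True then show ?thesis using that \<open>t * t = D\<close> t by (metis mult.commute)
  next
    case False then show ?thesis using that[of "- t" "- z"] \<open>t * t = D\<close> t by simp
  qed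
qed

text \<open>Here \<open>p\<close> and \<open>-q\<close> stand for integral eigenvalues of a strongly regular graph of prime
  order \<open>n\<close>, and \<open>mult\<close> is the integrality of the multiplicity of \<open>p\<close>.\<close>

lemma prime_order_no_integer_eigenvalues:
  fixes n k a mu p q z :: int
  assumes prime: "prime n" and n: "n = 2*k + 1"
    and a: "1 \<le> a" "a + 2 \<le> n" and mu: "0 \<le> mu" "mu \<le> a"
    and p: "0 \<le> p" and q: "0 \<le> q" and pq: "p * q = a - mu"
    and prod: "(a - p) * (a + q) = n * mu"
    and mult: "a + k * (p - q) = z * (p + q)"
  shows False
proof -
  have divisor: "m = 1 \<or> m = n" if "0 \<le> m" "m dvd n" for m
    using prime that unfolding prime_int_iff by blast
  consider "mu = 0" | "0 < mu" "p = 0" | "0 < mu" "1 \<le> p" using mu p by linarith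
  then show False
  proof cases
    case 1
    then have "p = a" using prod a q by auto
    then have "q = 1" using pq 1 a by (simp add: mult_cancel_left1)
    then have "n = (k + 1 - z) * (a + 1)" using mult n \<open>p = a\<close> by (simp add: algebra_simps)
    then have "a + 1 = 1 \<or> a + 1 = n" using divisor[of "a + 1"] a by simp
    then show False using a by linarith
  next
    case 2
    then have "mu = a" using pq by simp
    then have "a + q = n" using prod 2 a by simp
    moreover have "a = (z + k) * q" using mult 2 by (simp add: algebra_simps)
    ultimately have "n = (z + k + 1) * q" by (simp add: algebra_simps)
    then have "q dvd n" by simp
    then have "q = 1 \<or> q = n" using divisor q by blast
    then show False using \<open>a + q = n\<close> a by auto
  next
    case 3
    have "q < a"
    proof (rule ccontr)
      assume "\<not> q < a"
      then have "1 * a \<le> p * q" using 3 a by (intro mult_mono) auto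
      then show False using pq 3 by simp
    qed
    have "0 < a - p"
    proof (rule ccontr)
      assume "\<not> 0 < a - p"
      then have "(a - p) * (a + q) \<le> 0" using a q by (simp add: mult_nonpos_nonneg)
      moreover have "0 < n * mu" using 3 a by (simp add: mult_pos_pos)
      ultimately show False using prod by simp
    qed
    have "n dvd (a - p) * (a + q)" using prod by simp
    moreover have "\<not> n dvd (a - p)" using zdvd_imp_le \<open>0 < a - p\<close> a p by fastforce
    ultimately have "n dvd (a + q)" using prime prime_dvd_mult_iff by blast
    then obtain c where c: "a + q = n * c" by blast
    have "0 < n" using a by simp
    moreover have "0 < n * c" "n * c < n * 2" using c a q \<open>q < a\<close> by linarith+
    ultimately have "0 < c" "c < 2" using zero_less_mult_pos mult_less_cancel_left_pos by blast+
    then have "c = 1" by simp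
    then have "a - p = mu" using prod c a by (simp add: mult_cancel_right)
    then have "p * q = p * 1" using pq by simp
    then have "q = 1" using 3 by (subst (asm) mult_left_cancel) auto
    then show False using c \<open>c = 1\<close> a by simp
  qed
qed

lemma integer_eigenvalues_split:
  fixes t d s :: int
  assumes "0 \<le> t" "t * t = d\<^sup>2 + 4 * s" "0 \<le> s"
  obtains p q where "0 \<le> p" "0 \<le> q" "p - q = d" "p + q = t" "p * q = s"
proof -
  have "even ((t - d) * (t + d))" using assms(2) by (simp add: power2_eq_square algebra_simps)
  moreover have "even (t - d) \<longleftrightarrow> even (t + d)"
    by (metis add_diff_cancel_left' diff_add_eq even_add even_diff mult_2 dvd_triv_left)
  ultimately have "even (t - d)" by auto
  then obtain q where q: "t - d = 2 * q" by (rule evenE)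
  define p where "p = q + d"
  have "4 * (p * q) = 4 * s" using assms(2) q unfolding p_def by (simp add: power2_eq_square algebra_simps)
  then have pq: "p * q = s" by simp
  have "p + q = t" using q unfolding p_def by simp
  moreover have "0 \<le> p \<and> 0 \<le> q"
    using pq assms(1,3) \<open>p + q = t\<close> by (smt (verit) mult_pos_neg mult_neg_pos)
  ultimately show thesis using that[of p q] pq unfolding p_def by simp
qed

lemma intersection_numbers_sum:
  fixes d al be p q k :: nat
  assumes "0 < d" and rows: "d * d = d + k * al + k * be" and "k * al = p * d" "k * be = q * d"
  shows "p + q + 1 = d"
proof -
  have "(p + q + 1) * d = d * d" using assms(2-4) by (simp add: algebra_simps)
  then show ?thesis using assms(1) by (metis mult_right_cancel not_gr_zero)
qed

lemma gram_bound_intersection_numbers: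
  fixes d al be p q k :: nat
  assumes "0 < d" and rows: "d * d = d + k * al + k * be" and p: "k * al = p * d" and q: "k * be = q * d"
    and bound: "real (2 * k + 1) * (real al - real be)\<^sup>2 \<le> (2 * real d - real al - real be)\<^sup>2"
  shows "(2 * int k + 1) * (int p - int q)\<^sup>2 \<le> (2 * int k + 1 - int d)\<^sup>2"
proof -
  have u: "real k * (2 * real d - real al - real be) = real d * (2 * real k + 1 - real d)"
    using arg_cong[OF rows, of real] by (simp add: algebra_simps)
  have v: "real k * (real al - real be) = real d * (real p - real q)"
    using arg_cong[OF p, of real] arg_cong[OF q, of real] by (simp add: algebra_simps)
  have "(real k)\<^sup>2 * (real (2 * k + 1) * (real al - real be)\<^sup>2) \<le> (real k)\<^sup>2 * (2 * real d - real al - real be)\<^sup>2"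
    using bound by (intro mult_left_mono) auto
  then have "real (2 * k + 1) * (real k * (real al - real be))\<^sup>2 \<le> (real k * (2 * real d - real al - real be))\<^sup>2"
    by (simp only: power_mult_distrib mult_ac)
  then have "(real d)\<^sup>2 * (real (2 * k + 1) * (real p - real q)\<^sup>2) \<le> (real d)\<^sup>2 * (2 * real k + 1 - real d)\<^sup>2"
    unfolding u v by (simp only: power_mult_distrib mult_ac)
  then have "real (2 * k + 1) * (real p - real q)\<^sup>2 \<le> (2 * real k + 1 - real d)\<^sup>2" using assms(1) by simp
  then have "real_of_int ((2 * int k + 1) * (int p - int q)\<^sup>2) \<le> real_of_int ((2 * int k + 1 - int d)\<^sup>2)"
    by (simp add: add.commute)
  then show ?thesis by (simp only: of_int_le_iff)
qed

lemma valency_cases_89: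
  fixes d al be p q :: nat
  assumes d: "1 \<le> d" "d \<le> 89" and pq: "p + q + 1 = d"
    and p: "44 * al = p * d" and q: "44 * be = q * d"
    and sq: "89 * (int p - int q)\<^sup>2 \<le> (89 - int d)\<^sup>2"
  shows "d = 1 \<or> d = 89 \<or> 11 dvd d"
proof -
  \<comment> \<open>If \<open>11\<close> does not divide \<open>d\<close>, it divides \<open>p\<close> and \<open>q\<close>; then \<open>sq\<close> forces \<open>p = q\<close>, so \<open>d = 2p + 1\<close>.\<close>
  show ?thesis
  proof (rule ccontr)
    assume "\<not> ?thesis"
    then have d11: "\<not> 11 dvd d" and "d \<noteq> 1" "d \<noteq> 89" by auto
    have prime11: "prime (11::nat)" by (simp add: prime_nat_iff' atLeastLessThan_nat_numeral)
    have "p * d = 11 * (4 * al)" "q * d = 11 * (4 * be)" using p q by simp_all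
    then have "11 dvd p * d" "11 dvd q * d" by (metis dvd_triv_left)+
    then have "11 dvd p" "11 dvd q" using d11 prime_dvd_mult_iff[OF prime11] by blast+
    have "p = q"
    proof (rule ccontr)
      assume "p \<noteq> q"
      moreover have "int 11 dvd int p" "int 11 dvd int q"
        using \<open>11 dvd p\<close> \<open>11 dvd q\<close> by (simp_all only: int_dvd_int_iff)
      then have "11 dvd int p - int q" by simp
      ultimately have "\<bar>11\<bar> \<le> \<bar>int p - int q\<bar>" by (intro dvd_imp_le_int) auto
      then have "11\<^sup>2 \<le> (int p - int q)\<^sup>2" by (simp only: abs_le_square_iff)
      moreover have "(89 - int d)\<^sup>2 \<le> 88\<^sup>2" using d by (intro power_mono) auto
      ultimately show False using sq by (simp add: power2_eq_square)
    qed
    obtain j where j: "p = 11 * j" using \<open>11 dvd p\<close> by blast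
    then have "j = 0 \<or> j = 1 \<or> j = 2 \<or> j = 3 \<or> j = 4" using pq d \<open>p = q\<close> by linarith
    then show False using p j pq \<open>p = q\<close> \<open>d \<noteq> 1\<close> \<open>d \<noteq> 89\<close> by (elim disjE) (simp; presburger)+
  qed
qed

lemma exists_summand_eq_one:
  fixes f :: "'b \<Rightarrow> nat"
  assumes "finite I" "1 < card I" "\<And>i. i \<in> I \<Longrightarrow> 0 < f i" "(\<Sum>i\<in>I. f i) = s" "\<not> c dvd s"
    and cases: "\<And>i. i \<in> I \<Longrightarrow> f i = 1 \<or> f i = s \<or> c dvd f i"
  shows "\<exists>i\<in>I. f i = 1"
proof (rule ccontr)
  assume no_one: "\<not> (\<exists>i\<in>I. f i = 1)"
  show False
  proof (cases "\<exists>i\<in>I. f i = s")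
    case True
    then obtain i where i: "i \<in> I" "f i = s" by blast
    have "0 < card (I - {i})" using assms(1,2) i(1) by (simp add: card_Diff_singleton)
    then obtain j where j: "j \<in> I" "j \<noteq> i" by (auto simp: card_gt_0_iff)
    have "f i + f j \<le> (\<Sum>i\<in>I. f i)"
      using i j assms(1) by (simp add: sum.remove member_le_sum)
    then show False using i(2) assms(3)[OF j(1)] assms(4) by simp
  next
    case False
    then have "c dvd (\<Sum>i\<in>I. f i)" using cases no_one by (blast intro: dvd_sum)
    then show False using assms(4,5) by simp
  qed
qed

section \<open>Strongly regular graphs\<close>

locale strongly_regular =
  fixes X :: "'a set" and A :: "('a \<times> 'a) set" and n a lam mu :: nat
  assumes finite_X: "finite X" and card_X: "card X = n"
    and subset: "A \<subseteq> X \<times> X" and symmetric: "A\<inverse> = A" and irreflexive: "(x, x) \<notin> A"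
    and degree: "x \<in> X \<Longrightarrow> card (A``{x}) = a"
    and common_neighbours: "x \<in> X \<Longrightarrow> y \<in> X \<Longrightarrow> x \<noteq> y \<Longrightarrow>
      card (A``{x} \<inter> A``{y}) = (if (x, y) \<in> A then lam else mu)"
begin

text \<open>The element \<open>c\<^sub>0 I + c\<^sub>1 A + c\<^sub>2 J\<close> of the Bose-Mesner algebra, as a function on \<open>X \<times> X\<close>.\<close>

definition adj_comb :: "real \<Rightarrow> real \<Rightarrow> real \<Rightarrow> 'a \<Rightarrow> 'a \<Rightarrow> real" where
  "adj_comb c0 c1 c2 x y = c0 * of_bool (x = y) + c1 * of_bool ((x, y) \<in> A) + c2"

lemma adj_comb_commute: "adj_comb c0 c1 c2 x y = adj_comb c0 c1 c2 y x"
proof -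
  have "(x, y) \<in> A \<longleftrightarrow> (y, x) \<in> A" using symmetric by blast
  then show ?thesis by (simp add: adj_comb_def eq_commute)
qed

lemma adj_comb_diag: "adj_comb c0 c1 c2 x x = c0 + c2"
  by (simp add: adj_comb_def irreflexive)

lemma sum_adjacent:
  assumes "x \<in> X"
  shows "(\<Sum>z\<in>X. of_bool ((x, z) \<in> A)) = real a"
proof -
  have "X \<inter> {z. (x, z) \<in> A} = A``{x}" using subset by auto
  then show ?thesis using finite_X degree[OF assms] by simp
qed

lemma sum_adjacent':
  assumes "y \<in> X"
  shows "(\<Sum>z\<in>X. of_bool ((z, y) \<in> A)) = real a"
proof -
  have "(z, y) \<in> A \<longleftrightarrow> (y, z) \<in> A" for z using symmetric by blast
  then show ?thesis using sum_adjacent[OF assms] by simp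
qed

lemma sum_common_neighbours:
  assumes "x \<in> X" "y \<in> X"
  shows "(\<Sum>z\<in>X. of_bool ((x, z) \<in> A) * of_bool ((z, y) \<in> A))
    = adj_comb (real a - real mu) (real lam - real mu) (real mu) x y"
proof -
  have "X \<inter> {z. (x, z) \<in> A \<and> (z, y) \<in> A} = A``{x} \<inter> A``{y}" using subset symmetric by auto
  then have "(\<Sum>z\<in>X. of_bool ((x, z) \<in> A) * of_bool ((z, y) \<in> A)) = real (card (A``{x} \<inter> A``{y}))"
    using finite_X by (simp flip: of_bool_conj)
  then show ?thesis
    using degree[OF assms(1)] common_neighbours[OF assms] by (cases "x = y") (auto simp: adj_comb_def irreflexive)
qed

lemma adj_comb_mult:
  assumes x: "x \<in> X" and y: "y \<in> X"
  shows "(\<Sum>z\<in>X. adj_comb c0 c1 c2 x z * adj_comb d0 d1 d2 z y) =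
    adj_comb (c0*d0 + c1*d1*(real a - real mu))
       (c0*d1 + c1*d0 + c1*d1*(real lam - real mu))
       (c0*d2 + c2*d0 + c1*d1*real mu + real a*c1*d2 + real a*c2*d1 + real n*c2*d2) x y"
proof -
  let ?I = "\<lambda>u v. of_bool (u = v) :: real" and ?A = "\<lambda>u v. of_bool ((u, v) \<in> A) :: real"
  have delta_left: "(\<Sum>z\<in>X. ?I x z * f z) = f x" for f using x finite_X by simp
  have delta_right: "(\<Sum>z\<in>X. f z * ?I z y) = f y" for f using y finite_X by simp
  have "(\<Sum>z\<in>X. adj_comb c0 c1 c2 x z * adj_comb d0 d1 d2 z y) =
     c0*d0*(\<Sum>z\<in>X. ?I x z * ?I z y) + c0*d1*(\<Sum>z\<in>X. ?I x z * ?A z y) + c0*d2*(\<Sum>z\<in>X. ?I x z * 1)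
     + c1*d0*(\<Sum>z\<in>X. ?A x z * ?I z y) + c1*d1*(\<Sum>z\<in>X. ?A x z * ?A z y) + c1*d2*(\<Sum>z\<in>X. ?A x z)
     + c2*d0*(\<Sum>z\<in>X. 1 * ?I z y) + c2*d1*(\<Sum>z\<in>X. ?A z y) + c2*d2*(\<Sum>z\<in>X. 1)"
    by (simp add: adj_comb_def algebra_simps sum.distrib sum_distrib_left)
  also have "\<dots> = adj_comb (c0*d0 + c1*d1*(real a - real mu))
       (c0*d1 + c1*d0 + c1*d1*(real lam - real mu))
       (c0*d2 + c2*d0 + c1*d1*real mu + real a*c1*d2 + real a*c2*d1 + real n*c2*d2) x y"
    unfolding delta_left delta_right sum_adjacent[OF x] sum_adjacent'[OF y] sum_common_neighbours[OF x y]
    by (simp add: adj_comb_def card_X algebra_simps)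
  finally show ?thesis .
qed

lemma adj_comb_times:
  "adj_comb c0 c1 c2 x y * adj_comb d0 d1 d2 x y =
    adj_comb (c0*d0 + c0*d2 + c2*d0) (c1*d1 + c1*d2 + c2*d1) (c2*d2) x y"
  by (cases "x = y") (auto simp: adj_comb_def irreflexive algebra_simps)

lemma sum_adj_comb:
  "(\<Sum>x\<in>X. \<Sum>y\<in>X. adj_comb c0 c1 c2 x y) = real n * (c0 + real a * c1 + real n * c2)"
proof -
  have "(\<Sum>x\<in>X. \<Sum>y\<in>X. adj_comb c0 c1 c2 x y) = (\<Sum>x\<in>X. c0 + real a * c1 + real n * c2)"
    using finite_X sum_adjacent
    by (intro sum.cong refl) (simp add: adj_comb_def sum.distrib card_X flip: sum_distrib_left)
  then show ?thesis using card_X by (simp add: algebra_simps)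
qed

lemma srg_equation:
  assumes "X \<noteq> {}"
  shows "real a * real a = real a - real mu + (real lam - real mu) * real a + real n * real mu"
proof -
  obtain x where x: "x \<in> X" using assms by blast
  have "(\<Sum>y\<in>X. \<Sum>z\<in>X. of_bool ((x, z) \<in> A) * of_bool ((z, y) \<in> A))
      = (\<Sum>z\<in>X. of_bool ((x, z) \<in> A) * (\<Sum>y\<in>X. of_bool ((z, y) \<in> A)) :: real)"
    by (subst sum.swap) (simp only: sum_distrib_left)
  also have "\<dots> = (\<Sum>z\<in>X. of_bool ((x, z) \<in> A) * real a)"
    using sum_adjacent by (intro sum.cong refl) simp
  also have "\<dots> = real a * real a" using sum_adjacent[OF x] by (simp flip: sum_distrib_right)
  moreover have "(\<Sum>y\<in>X. \<Sum>z\<in>X. of_bool ((x, z) \<in> A) * of_bool ((z, y) \<in> A)) =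
      real a - real mu + (real lam - real mu) * real a + real n * real mu"
    using sum_common_neighbours[OF x] finite_X x sum_adjacent[OF x]
    by (simp add: adj_comb_def sum.distrib card_X flip: sum_distrib_left)
  ultimately show ?thesis by simp
qed

definition discriminant :: real where
  "discriminant = (real lam - real mu)\<^sup>2 + 4 * (real a - real mu)"

text \<open>For \<open>w\<^sup>2 = discriminant\<close> the eigenvalues of \<open>A\<close> orthogonal to the all-ones vector are
  \<open>\<tau> = (\<lambda> - \<mu> - w)/2\<close> and \<open>\<theta> = \<tau> + w\<close>, and this is the orthogonal projection
  \<open>(A - \<tau>I - (a - \<tau>)/n J)/(\<theta> - \<tau>)\<close> onto the \<open>\<theta>\<close>-eigenspace.\<close>

definition spectral_idempotent :: "real \<Rightarrow> 'a \<Rightarrow> 'a \<Rightarrow> real" where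
  "spectral_idempotent w =
    (let \<tau> = (real lam - real mu - w) / 2 in adj_comb (- \<tau> / w) (1 / w) (- (real a - \<tau>) / (real n * w)))"

lemma spectral_idempotent_commute: "spectral_idempotent w x y = spectral_idempotent w y x"
  unfolding spectral_idempotent_def Let_def by (rule adj_comb_commute)

lemma spectral_idempotent_idempotent:
  assumes w: "w\<^sup>2 = discriminant" "w \<noteq> 0" and xy: "x \<in> X" "y \<in> X"
  shows "(\<Sum>z\<in>X. spectral_idempotent w x z * spectral_idempotent w z y) = spectral_idempotent w x y"
proof -
  define \<tau> where "\<tau> = (real lam - real mu - w) / 2"
  have n: "real n \<noteq> 0" using xy card_X finite_X card_0_eq by fastforce
  have srg: "real a * real a = real a - real mu + (real lam - real mu) * real a + real n * real mu"
    using srg_equation xy by blast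
  have w2: "w * w = (real lam - real mu)\<^sup>2 + 4 * (real a - real mu)"
    using w unfolding discriminant_def by (simp add: power2_eq_square)
  have "(- \<tau> / w) * (- \<tau> / w) + (1 / w) * (1 / w) * (real a - real mu) = - \<tau> / w"
    using w(2) w2 unfolding \<tau>_def by (simp add: field_simps power2_eq_square) algebra
  moreover have "(- \<tau> / w) * (1 / w) + (1 / w) * (- \<tau> / w) + (1 / w) * (1 / w) * (real lam - real mu) = 1 / w"
    using w(2) unfolding \<tau>_def by (simp add: field_simps)
  moreover have "(- \<tau> / w) * (- (real a - \<tau>) / (real n * w)) + (- (real a - \<tau>) / (real n * w)) * (- \<tau> / w)
      + (1 / w) * (1 / w) * real mu + real a * (1 / w) * (- (real a - \<tau>) / (real n * w))
      + real a * (- (real a - \<tau>) / (real n * w)) * (1 / w)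
      + real n * (- (real a - \<tau>) / (real n * w)) * (- (real a - \<tau>) / (real n * w))
      = - (real a - \<tau>) / (real n * w)"
    using w(2) n w2 srg unfolding \<tau>_def by (simp add: field_simps power2_eq_square) algebra
  ultimately show ?thesis
    unfolding spectral_idempotent_def Let_def adj_comb_mult[OF xy] \<tau>_def[symmetric] by simp
qed

lemma discriminant_pos:
  assumes "X \<noteq> {}" "1 \<le> a" "a < n" "mu \<le> a"
  shows "0 < discriminant"
proof -
  have "discriminant \<noteq> 0"
  proof
    assume "discriminant = 0"
    moreover have "0 \<le> (real lam - real mu)\<^sup>2" "real mu \<le> real a" using assms(4) by simp_all
    ultimately have "(real lam - real mu)\<^sup>2 = 0 \<and> 4 * (real a - real mu) = 0"
      unfolding discriminant_def by (simp add: add_nonneg_eq_0_iff)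
    then have "lam = mu" "a = mu" by simp_all
    then have "real a * real a = real n * real a" using srg_equation[OF assms(1)] by simp
    then show False using assms(2,3) by simp
  qed
  moreover have "0 \<le> discriminant" using assms(4) unfolding discriminant_def by simp
  ultimately show ?thesis by linarith
qed

lemma trace_spectral_idempotent:
  assumes "n = 2 * k + 1" "w \<noteq> 0"
  shows "(\<Sum>x\<in>X. spectral_idempotent w x x) = (real k * (w - (real lam - real mu)) - real a) / w"
proof -
  define \<tau> where "\<tau> = (real lam - real mu - w) / 2"
  have "(\<Sum>x\<in>X. spectral_idempotent w x x) = real n * (- \<tau> / w + - (real a - \<tau>) / (real n * w))"
    by (simp add: spectral_idempotent_def Let_def adj_comb_diag card_X \<tau>_def)
  also have "\<dots> = (- (real n - 1) * \<tau> - real a) / w"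
    using assms by (simp add: field_simps del: of_nat_Suc)
  also have "\<dots> = (real k * (w - (real lam - real mu)) - real a) / w"
    using assms unfolding \<tau>_def by (simp add: field_simps)
  finally show ?thesis .
qed

lemma srg_equation_int:
  assumes "X \<noteq> {}"
  shows "int a * int a = int a - int mu + (int lam - int mu) * int a + int n * int mu"
proof -
  have "real_of_int (int a * int a) = real_of_int (int a - int mu + (int lam - int mu) * int a + int n * int mu)"
    using srg_equation[OF assms] by simp
  then show ?thesis by (simp only: of_int_eq_iff)
qed

lemma conference_if_equal_multiplicities:
  assumes X: "X \<noteq> {}" and n: "n = 2 * k + 1" and a: "1 \<le> a" "a + 2 \<le> n"
    and ak: "int a = int k * (int mu - int lam)"
  shows "2 * a + 1 = n \<and> a = 2 * mu \<and> lam + 1 = mu"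
proof -
  have "int mu - int lam = 1"
  proof -
    have "0 < int k * (int mu - int lam)" using ak a by linarith
    then have "0 < int mu - int lam" using zero_less_mult_iff[of "int k"] by fastforce
    moreover have "int mu - int lam < 2"
    proof (rule ccontr)
      assume "\<not> int mu - int lam < 2"
      then have "int k * 2 \<le> int k * (int mu - int lam)" by (intro mult_left_mono) auto
      moreover have "int a + 1 \<le> 2 * int k" using a n by simp
      ultimately show False using ak by linarith
    qed
    ultimately show ?thesis by simp
  qed
  then have "a = k" "lam + 1 = mu" using ak by simp_all
  moreover have "k = 2 * mu"
  proof -
    have "int k * int k = int k * (2 * int mu)"
      using srg_equation_int[OF X] \<open>a = k\<close> n by (simp add: algebra_simps flip: \<open>lam + 1 = mu\<close>)
    then show ?thesis using a \<open>a = k\<close> by simp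
  qed
  ultimately show ?thesis using n by simp
qed

lemma discriminant_not_square_prime_order:
  assumes X: "X \<noteq> {}" and prime: "prime n" and n: "n = 2 * k + 1"
    and a: "1 \<le> a" "a + 2 \<le> n" and mu: "mu \<le> a"
    and t: "0 \<le> t" "t * t = (int lam - int mu)\<^sup>2 + 4 * (int a - int mu)"
    and mult: "int a + int k * (int lam - int mu) = z * t"
  shows False
proof -
  obtain p q where pq: "0 \<le> p" "0 \<le> q" "p - q = int lam - int mu" "p + q = t" "p * q = int a - int mu"
    using integer_eigenvalues_split[OF t] mu by auto
  have "(int a - p) * (int a + q) = int a * int a - int a * (p - q) - p * q" by (simp add: algebra_simps)
  then have "(int a - p) * (int a + q) = int n * int mu"
    using srg_equation_int[OF X] pq by (simp add: algebra_simps)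
  moreover have "int a + int k * (p - q) = z * (p + q)" using mult pq by simp
  moreover have "prime (int n)" using prime by simp
  ultimately show False
    by (intro prime_order_no_integer_eigenvalues[of "int n" "int k" "int a" "int mu" p q z])
      (use a mu n pq in simp_all)
qed

text \<open>The multiplicity \<open>f\<close> of \<open>\<theta>\<close> satisfies \<open>a + k(\<lambda> - \<mu>) = (k - f) w\<close>: either \<open>f = k\<close>, the
  conference case, or \<open>w\<close> is rational, hence an integer, which prime order excludes.\<close>

lemma conference_of_prime_order:
  assumes "CARD('t::finite) = n" and prime: "prime n" and a: "1 \<le> a" "a + 2 \<le> n" and mu: "mu \<le> a"
  shows "2 * a + 1 = n \<and> a = 2 * mu \<and> lam + 1 = mu"
proof -
  have "odd n" using prime_odd_nat[OF prime] a by simp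
  then obtain k where n: "n = 2 * k + 1" by (rule oddE)
  have X: "X \<noteq> {}" using card_X n by auto
  define w where "w = sqrt discriminant"
  have "0 < discriminant" using discriminant_pos[OF X] a mu by simp
  then have w: "w\<^sup>2 = discriminant" "0 < w" unfolding w_def by simp_all
  have "(\<Sum>x\<in>X. spectral_idempotent w x x) \<in> \<nat>"
    using finite_X card_X assms(1) spectral_idempotent_commute spectral_idempotent_idempotent[OF w(1)] w(2)
    by (intro diag_sum_symmetric_idempotent_in_Nats[where 'n='t]) auto
  then obtain f :: nat where "(\<Sum>x\<in>X. spectral_idempotent w x x) = real f" by (auto elim: Nats_cases)
  then have "real f * w = real k * (w - (real lam - real mu)) - real a"
    using trace_spectral_idempotent[OF n] w(2) by (simp add: field_simps)
  then have mult: "real_of_int (int a + int k * (int lam - int mu)) = real_of_int (int k - int f) * w"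
    by (simp add: algebra_simps)
  show ?thesis
  proof (cases "int k = int f")
    case True
    then have "real_of_int (int a + int k * (int lam - int mu)) = 0" using mult by simp
    then have "int a = int k * (int mu - int lam)" by (simp only: of_int_eq_0_iff) (simp add: algebra_simps)
    then show ?thesis using conference_if_equal_multiplicities[OF X n a] by blast
  next
    case False
    have D: "w\<^sup>2 = real_of_int ((int lam - int mu)\<^sup>2 + 4 * (int a - int mu))"
      using w(1) unfolding discriminant_def by simp
    obtain t z where "0 \<le> t" "t * t = (int lam - int mu)\<^sup>2 + 4 * (int a - int mu)"
      "int a + int k * (int lam - int mu) = z * t"
      using rational_root_of_int_is_int[OF _ mult D] False by auto
    then show ?thesis using discriminant_not_square_prime_order[OF X prime n a mu] by blast
  qed
qed

lemma conference_trace_gram_spectral_idempotent: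
  assumes conf: "2 * a + 1 = n" "a = 2 * mu" "lam + 1 = mu" and w: "w\<^sup>2 = real n"
  shows "(\<Sum>x\<in>X. \<Sum>x'\<in>X. adj_comb c0 c1 c2 x x' * spectral_idempotent w x x')
    = real a / 2 * (2 * c0 - c1 + w * c1)"
proof -
  have params: "real n = w * w" "real a = (w * w - 1) / 2" "real lam - real mu = - 1"
    using conf w by (simp_all add: power2_eq_square)
  have w0: "w \<noteq> 0" using params(1,2) conf by auto
  define e0 e1 e2 where "e0 = (w + w * w) / (2 * w * w)" and "e1 = w / (w * w)"
    and "e2 = - (w + 1) / (2 * w * w)"
  have "- ((real lam - real mu - w) / 2) / w = e0" "1 / w = e1"
    "- (real a - (real lam - real mu - w) / 2) / (real n * w) = e2"
    unfolding e0_def e1_def e2_def params using w0 by (simp_all add: field_simps)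
  then have E: "spectral_idempotent w = adj_comb e0 e1 e2"
    unfolding spectral_idempotent_def Let_def by simp
  show ?thesis
    unfolding E adj_comb_times sum_adj_comb params(1,2) e0_def e1_def e2_def using w0
    by (simp add: field_simps)
qed

lemma conference_gram_bound:
  assumes conf: "2 * a + 1 = n" "a = 2 * mu" "lam + 1 = mu"
    and gram: "\<And>x x'. x \<in> X \<Longrightarrow> x' \<in> X \<Longrightarrow> adj_comb c0 c1 c2 x x' = (\<Sum>y\<in>Y. f x y * f x' y)"
  shows "real n * c1\<^sup>2 \<le> (2 * c0 - c1)\<^sup>2"
proof -
  have "0 < a" using conf by simp
  have lam: "real lam - real mu = - 1" using conf by simp
  have disc: "discriminant = real n" using conf unfolding discriminant_def lam by simp
  have nonneg: "0 \<le> 2 * c0 - c1 + w * c1" if w: "w\<^sup>2 = real n" for w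
  proof -
    have "w \<noteq> 0" using w conf by auto
    then have "0 \<le> (\<Sum>x\<in>X. \<Sum>x'\<in>X. (\<Sum>y\<in>Y. f x y * f x' y) * spectral_idempotent w x x')"
      using finite_X spectral_idempotent_commute spectral_idempotent_idempotent[of w] w disc
      by (intro gram_symmetric_idempotent_nonneg) auto
    also have "\<dots> = (\<Sum>x\<in>X. \<Sum>x'\<in>X. adj_comb c0 c1 c2 x x' * spectral_idempotent w x x')"
      using gram by (intro sum.cong refl) simp
    also have "\<dots> = real a / 2 * (2 * c0 - c1 + w * c1)"
      by (rule conference_trace_gram_spectral_idempotent[OF conf w])
    finally show ?thesis using \<open>0 < a\<close> by (simp add: zero_le_mult_iff)
  qed
  have "\<bar>sqrt (real n) * c1\<bar> \<le> \<bar>2 * c0 - c1\<bar>"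
    using nonneg[of "sqrt (real n)"] nonneg[of "- sqrt (real n)"] by (simp add: abs_le_iff)
  then have "(sqrt (real n) * c1)\<^sup>2 \<le> (2 * c0 - c1)\<^sup>2" by (simp only: abs_le_square_iff)
  then show ?thesis by (simp add: power_mult_distrib)
qed

end

section \<open>Coherent configurations\<close>

locale coherent =
  fixes V :: "'a set" and \<R> :: "('a \<times> 'a) set set"
  assumes coherent: "coherent_configuration V \<R>"
begin

lemma finite_V: "finite V"
  using coherent unfolding coherent_configuration_def by blast

lemma partition: "partition_on (V \<times> V) \<R>"
  using coherent unfolding coherent_configuration_def by blast

lemma relation_subset: "T \<in> \<R> \<Longrightarrow> T \<subseteq> V \<times> V"
  using partition_onD1[OF partition] by blast

lemma relation_nonempty: "T \<in> \<R> \<Longrightarrow> T \<noteq> {}"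
  using partition_onD3[OF partition] by blast

lemma relations_disjoint: "T \<in> \<R> \<Longrightarrow> T' \<in> \<R> \<Longrightarrow> T \<noteq> T' \<Longrightarrow> T \<inter> T' = {}"
  using partition_onD2[OF partition] by (simp add: disjointD)

lemma relation_cover: "u \<in> V \<Longrightarrow> v \<in> V \<Longrightarrow> \<exists>T\<in>\<R>. (u,v) \<in> T"
  using partition_onD1[OF partition] by blast

lemma converse_relation: "T \<in> \<R> \<Longrightarrow> T\<inverse> \<in> \<R>"
  using coherent unfolding coherent_configuration_def by blast

lemma intersection_count_eq:
  assumes "R \<in> \<R>" "S \<in> \<R>" "T \<in> \<R>" "(u,v) \<in> T" "(u',v') \<in> T"
  shows "card (R``{u} \<inter> S\<inverse>``{v}) = card (R``{u'} \<inter> S\<inverse>``{v'})"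
proof -
  obtain c where c: "\<forall>(u,v)\<in>T. card (R``{u} \<inter> S\<inverse>``{v}) = c"
    using coherent assms(1-3) unfolding coherent_configuration_def by meson
  show ?thesis using bspec[OF c assms(4)] bspec[OF c assms(5)] by simp
qed

lemma intersection_number_eq:
  assumes "R \<in> \<R>" "S \<in> \<R>" "T \<in> \<R>" "(u,v) \<in> T"
  shows "intersection_number R S T = card (R``{u} \<inter> S\<inverse>``{v})"
proof -
  obtain u' v' where "(SOME p. p \<in> T) = (u',v')" "(u',v') \<in> T"
    using someI[of "\<lambda>p. p \<in> T", OF assms(4)] by (metis surj_pair)
  then show ?thesis
    unfolding intersection_number_def using intersection_count_eq[OF assms(1-3) _ assms(4)] by simp
qed

lemma fiber_subset: "fiber \<R> X \<Longrightarrow> X \<subseteq> V"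
  unfolding fiber_def using relation_subset by (auto simp: Id_on_def)

lemma finite_fiber: "fiber \<R> X \<Longrightarrow> finite X"
  using fiber_subset finite_V finite_subset by blast

lemma finite_rels_between: "finite (rels_between \<R> X Y)"
  using finite_elements[OF _ partition] finite_V unfolding rels_between_def by simp

lemma rels_between_relation:
  "S \<in> rels_between \<R> X Y \<Longrightarrow> S \<in> \<R>" "S \<in> rels_between \<R> X Y \<Longrightarrow> S \<subseteq> X \<times> Y"
  unfolding rels_between_def by simp_all

lemma obtain_fiber_pair:
  assumes "fiber \<R> X" "S \<in> rels_between \<R> X Y"
  obtains x y where "(x, y) \<in> S" "x \<in> X" "y \<in> Y"
  using relation_nonempty[OF rels_between_relation(1)[OF assms(2)]] rels_between_relation(2)[OF assms(2)]
  by auto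

lemma relation_subset_fibers:
  assumes X: "fiber \<R> X" and Y: "fiber \<R> Y" and T: "T \<in> \<R>"
    and xy: "(x, y) \<in> T" "x \<in> X" "y \<in> Y"
  shows "T \<subseteq> X \<times> Y"
proof
  fix p assume p: "p \<in> T"
  obtain u v where uv: "p = (u, v)" by (cases p)
  have IX: "Id_on X \<in> \<R>" and IY: "Id_on Y \<in> \<R>" using X Y unfolding fiber_def by auto
  have "card (Id_on X``{u} \<inter> T\<inverse>``{v}) = card (Id_on X``{x} \<inter> T\<inverse>``{y})"
    using intersection_count_eq[OF IX T T] p uv xy by blast
  also have "Id_on X``{x} \<inter> T\<inverse>``{y} = {x}" using xy by auto
  finally have "u \<in> X" by (cases "u \<in> X") auto
  have "card (T``{u} \<inter> (Id_on Y)\<inverse>``{v}) = card (T``{x} \<inter> (Id_on Y)\<inverse>``{y})"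
    using intersection_count_eq[OF T IY T] p uv xy by blast
  also have "T``{x} \<inter> (Id_on Y)\<inverse>``{y} = {y}" using xy by auto
  finally have "v \<in> Y" by (cases "v \<in> Y") auto
  show "p \<in> X \<times> Y" using uv \<open>u \<in> X\<close> \<open>v \<in> Y\<close> by simp
qed

lemma rels_between_cover:
  assumes "fiber \<R> X" "fiber \<R> Y" "x \<in> X" "y \<in> Y"
  shows "\<exists>S\<in>rels_between \<R> X Y. (x, y) \<in> S"
proof -
  have "x \<in> V" "y \<in> V" using fiber_subset assms by auto
  then obtain T where T: "T \<in> \<R>" "(x, y) \<in> T" using relation_cover by blast
  then have "T \<subseteq> X \<times> Y" using relation_subset_fibers assms by blast
  then show ?thesis using T unfolding rels_between_def by blast
qed

lemma valency_eq_card_Image: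
  assumes "fiber \<R> X" "S \<in> \<R>" "x \<in> X"
  shows "valency X S = card (S``{x})"
  using intersection_number_eq[OF assms(2) converse_relation[OF assms(2)] assms(1)[unfolded fiber_def], of x x]
    assms(3) by (simp add: valency_def Id_onI)

lemma valency_pos:
  assumes "fiber \<R> X" "S \<in> rels_between \<R> X Y"
  shows "0 < valency X S"
proof -
  obtain x y where xy: "(x, y) \<in> S" "x \<in> X" using obtain_fiber_pair[OF assms] by blast
  have "finite (S``{x})"
    using relation_subset[OF rels_between_relation(1)[OF assms(2)]] finite_V finite_subset by fastforce
  then show ?thesis
    using valency_eq_card_Image[OF assms(1) rels_between_relation(1)[OF assms(2)] xy(2)] xy(1)
      card_gt_0_iff by fastforce
qed

lemma valency_le_card:
  assumes X: "fiber \<R> X" and Y: "fiber \<R> Y" and S: "S \<in> rels_between \<R> X Y"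
  shows "valency X S \<le> card Y"
proof -
  obtain x y where "(x, y) \<in> S" "x \<in> X" using obtain_fiber_pair[OF X S] by blast
  then have "valency X S = card (S``{x})"
    using valency_eq_card_Image[OF X rels_between_relation(1)[OF S]] by simp
  also have "\<dots> \<le> card Y"
    using rels_between_relation(2)[OF S] finite_fiber[OF Y] by (intro card_mono) auto
  finally show ?thesis .
qed

lemma sum_fiber_split:
  assumes X: "fiber \<R> X" and Y: "fiber \<R> Y" and x: "x \<in> X"
  shows "(\<Sum>y\<in>Y. g y) = (\<Sum>S\<in>rels_between \<R> X Y. \<Sum>y\<in>S``{x}. g y)"
proof -
  have image_subset: "S``{x} \<subseteq> Y" if "S \<in> rels_between \<R> X Y" for S
    using rels_between_relation(2)[OF that] by blast
  have "Y = (\<Union>S\<in>rels_between \<R> X Y. S``{x})"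
  proof (intro equalityI subsetI)
    fix y assume "y \<in> Y"
    then obtain S where "S \<in> rels_between \<R> X Y" "(x, y) \<in> S" using rels_between_cover[OF X Y x] by blast
    then show "y \<in> (\<Union>S\<in>rels_between \<R> X Y. S``{x})" by blast
  qed (use image_subset in blast)
  moreover have "(\<Sum>y\<in>(\<Union>S\<in>rels_between \<R> X Y. S``{x}). g y) = (\<Sum>S\<in>rels_between \<R> X Y. \<Sum>y\<in>S``{x}. g y)"
  proof (rule sum.UNION_disjoint[OF finite_rels_between])
    show "\<forall>S\<in>rels_between \<R> X Y. finite (S``{x})"
      using finite_fiber[OF Y] image_subset finite_subset by blast
    show "\<forall>S\<in>rels_between \<R> X Y. \<forall>S'\<in>rels_between \<R> X Y. S \<noteq> S' \<longrightarrow> S``{x} \<inter> S'``{x} = {}"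
      using relations_disjoint rels_between_relation(1) by blast
  qed
  ultimately show ?thesis by simp
qed

lemma sum_valency_rels_between:
  assumes X: "fiber \<R> X" and Y: "fiber \<R> Y" and x: "x \<in> X"
  shows "(\<Sum>S\<in>rels_between \<R> X Y. valency X S) = card Y"
proof -
  have "(\<Sum>S\<in>rels_between \<R> X Y. valency X S) = (\<Sum>S\<in>rels_between \<R> X Y. card (S``{x}))"
    using valency_eq_card_Image[OF X _ x] rels_between_relation(1) by (intro sum.cong) auto
  also have "\<dots> = card Y" using sum_fiber_split[OF X Y x, of "\<lambda>_. 1 :: nat"] by simp
  finally show ?thesis .
qed

lemma card_Int_Image_eq_intersection_number:
  assumes "S \<in> \<R>" "T \<in> \<R>" "(x, x') \<in> T"
  shows "card (S``{x} \<inter> S``{x'}) = intersection_number S (S\<inverse>) T"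
  using intersection_number_eq[OF assms(1) converse_relation[OF assms(1)] assms(2,3)] by simp

lemma sum_card_Int_Image_over_relation:
  assumes X: "fiber \<R> X" and S: "S \<in> \<R>" and T: "T \<in> \<R>" and x: "x \<in> X"
  shows "(\<Sum>x'\<in>T``{x}. card (S``{x} \<inter> S``{x'})) = valency X T * intersection_number S (S\<inverse>) T"
proof -
  have "(\<Sum>x'\<in>T``{x}. card (S``{x} \<inter> S``{x'})) = (\<Sum>x'\<in>T``{x}. intersection_number S (S\<inverse>) T)"
    using card_Int_Image_eq_intersection_number[OF S T] by (intro sum.cong) auto
  then show ?thesis using valency_eq_card_Image[OF X T x] by simp
qed

lemma valency_mult_intersection_number:
  assumes X: "fiber \<R> X" and Y: "fiber \<R> Y"
    and T: "T \<in> rels_between \<R> X X" and S: "S \<in> rels_between \<R> X Y"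
  shows "valency X T * intersection_number S (S\<inverse>) T = intersection_number T S S * valency X S"
proof -
  note SR = rels_between_relation[OF S] and TR = rels_between_relation[OF T]
  obtain x x' where x: "(x, x') \<in> T" "x \<in> X" using obtain_fiber_pair[OF X T] by blast
  have finite: "finite (T``{x})" "finite (S``{x})"
    using finite_fiber[OF X] finite_fiber[OF Y] TR(2) SR(2) by (auto intro: finite_subset)
  have "valency X T * intersection_number S (S\<inverse>) T = (\<Sum>x'\<in>T``{x}. card (S``{x} \<inter> S``{x'}))"
    using sum_card_Int_Image_over_relation[OF X SR(1) TR(1) x(2)] by simp
  also have "\<dots> = (\<Sum>y\<in>S``{x}. card (T``{x} \<inter> S\<inverse>``{y}))"
    by (rule sum_card_Int_Image_swap[OF finite])
  also have "\<dots> = (\<Sum>y\<in>S``{x}. intersection_number T S S)"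
    using intersection_number_eq[OF TR(1) SR(1) SR(1)] by (intro sum.cong) auto
  also have "\<dots> = intersection_number T S S * valency X S"
    using valency_eq_card_Image[OF X SR(1) x(2)] by simp
  finally show ?thesis .
qed

lemma sum_valency_intersection_number:
  assumes X: "fiber \<R> X" and Y: "fiber \<R> Y" and S: "S \<in> rels_between \<R> X Y"
  shows "(\<Sum>T\<in>rels_between \<R> X X. valency X T * intersection_number S (S\<inverse>) T) = valency X S * valency Y (S\<inverse>)"
proof -
  note SR = rels_between_relation[OF S]
  obtain x y where x: "(x, y) \<in> S" "x \<in> X" using obtain_fiber_pair[OF X S] by blast
  have "(\<Sum>T\<in>rels_between \<R> X X. valency X T * intersection_number S (S\<inverse>) T)
      = (\<Sum>T\<in>rels_between \<R> X X. \<Sum>x'\<in>T``{x}. card (S``{x} \<inter> S``{x'}))"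
    using sum_card_Int_Image_over_relation[OF X SR(1) _ x(2)] rels_between_relation(1)
    by (intro sum.cong) auto
  also have "\<dots> = (\<Sum>x'\<in>X. card (S``{x} \<inter> S``{x'}))"
    by (rule sum_fiber_split[OF X X x(2), symmetric])
  also have "\<dots> = (\<Sum>y\<in>S``{x}. card (X \<inter> S\<inverse>``{y}))"
    using finite_fiber[OF X] finite_fiber[OF Y] SR(2) by (intro sum_card_Int_Image_swap) (auto intro: finite_subset)
  also have "\<dots> = (\<Sum>y\<in>S``{x}. valency Y (S\<inverse>))"
  proof (intro sum.cong refl)
    fix y assume "y \<in> S``{x}"
    then have "y \<in> Y" "X \<inter> S\<inverse>``{y} = S\<inverse>``{y}" using SR(2) by auto
    then show "card (X \<inter> S\<inverse>``{y}) = valency Y (S\<inverse>)"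
      using valency_eq_card_Image[OF Y converse_relation[OF SR(1)]] by simp
  qed
  also have "\<dots> = valency X S * valency Y (S\<inverse>)"
    using valency_eq_card_Image[OF X SR(1) x(2)] by simp
  finally show ?thesis .
qed

lemma card_mult_valency_converse:
  assumes X: "fiber \<R> X" and Y: "fiber \<R> Y" and S: "S \<in> rels_between \<R> X Y"
  shows "card X * valency X S = card Y * valency Y (S\<inverse>)"
proof -
  note SR = rels_between_relation[OF S]
  have "card S = (\<Sum>x\<in>X. card (S``{x}))"
    using card_eq_sum_card_Image[OF SR(2) finite_fiber[OF X] finite_fiber[OF Y]] .
  also have "\<dots> = (\<Sum>x\<in>X. valency X S)"
    using valency_eq_card_Image[OF X SR(1)] by (intro sum.cong) auto
  also have "\<dots> = card X * valency X S" by simp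
  finally have "card S = card X * valency X S" .
  moreover have "card (S\<inverse>) = (\<Sum>y\<in>Y. card (S\<inverse>``{y}))"
    using SR(2) finite_fiber[OF X] finite_fiber[OF Y] by (intro card_eq_sum_card_Image) auto
  moreover have "\<dots> = (\<Sum>y\<in>Y. valency Y (S\<inverse>))"
    using valency_eq_card_Image[OF Y converse_relation[OF SR(1)]] by (intro sum.cong) auto
  ultimately show ?thesis by simp
qed

end

section \<open>Fibers of rank three\<close>

locale rank_three_fiber = coherent +
  fixes X :: "'a set" and A B :: "('a \<times> 'a) set"
  assumes fiber: "fiber \<R> X"
    and rels_X: "rels_between \<R> X X = {Id_on X, A, B}"
    and rank_three: "card (rels_between \<R> X X) = 3"
begin

lemma distinct: "A \<noteq> Id_on X" "B \<noteq> Id_on X" "A \<noteq> B"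
  using rank_three unfolding rels_X by (auto simp: card_insert_if split: if_splits)

lemma in_rels_X: "Id_on X \<in> rels_between \<R> X X" "A \<in> rels_between \<R> X X" "B \<in> rels_between \<R> X X"
  unfolding rels_X by simp_all

lemma relations: "A \<in> \<R>" "A \<subseteq> X \<times> X" "B \<in> \<R>" "B \<subseteq> X \<times> X"
  using rels_between_relation in_rels_X by blast+

lemma finite_X: "finite X"
  using finite_fiber[OF fiber] .

lemma pair_cases: "x \<in> X \<Longrightarrow> x' \<in> X \<Longrightarrow> x = x' \<or> (x, x') \<in> A \<or> (x, x') \<in> B"
  using rels_between_cover[OF fiber fiber, of x x'] unfolding rels_X by auto

lemma disjoint_Id_on: "T \<in> \<R> \<Longrightarrow> T \<noteq> Id_on X \<Longrightarrow> (x, x) \<notin> T \<or> x \<notin> X"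
  using relations_disjoint[of T "Id_on X"] fiber unfolding fiber_def by blast

lemma irreflexive: "(x, x) \<notin> A" "(x, x) \<notin> B"
  using disjoint_Id_on[of A x] disjoint_Id_on[of B x] relations distinct by blast+

lemma A_B_disjoint: "(x, x') \<in> A \<Longrightarrow> (x, x') \<notin> B"
  using relations_disjoint[of A B] relations distinct by blast

lemma valency_Id_on: "valency X (Id_on X) = 1"
proof -
  obtain x x' where "(x, x') \<in> A" "x \<in> X" using obtain_fiber_pair[OF fiber in_rels_X(2)] by blast
  then show ?thesis
    using valency_eq_card_Image[OF fiber fiber[unfolded fiber_def]] by (simp add: Image_Id_on)
qed

lemma sum_rels_X: "(\<Sum>T\<in>rels_between \<R> X X. g T) = g (Id_on X) + g A + g B"
  using distinct unfolding rels_X by (simp add: add.assoc)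

lemma card_fiber: "card X = 1 + valency X A + valency X B"
proof -
  obtain x x' where "(x, x') \<in> A" "x \<in> X" using obtain_fiber_pair[OF fiber in_rels_X(2)] by blast
  then show ?thesis
    using sum_valency_rels_between[OF fiber fiber] valency_Id_on unfolding sum_rels_X by simp
qed

lemma converse_cases: "A\<inverse> = A \<or> A\<inverse> = B"
proof -
  have "A\<inverse> \<in> rels_between \<R> X X"
    using converse_relation relations unfolding rels_between_def by blast
  moreover have "A\<inverse> \<noteq> Id_on X" using distinct by (metis converse_Id_on converse_converse)
  ultimately show ?thesis unfolding rels_X by blast
qed

lemma card_mod_4_if_converse_eq:
  assumes conv: "A\<inverse> = B"
  shows "card X mod 4 = 3"
proof -
  define a where "a = valency X A"
  obtain u v where uv: "(u, v) \<in> A" using relation_nonempty relations by blast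
  have "0 < card X" using uv relations finite_X card_gt_0_iff by blast
  then have b: "valency X B = a"
    using card_mult_valency_converse[OF fiber fiber in_rels_X(2)] conv unfolding a_def by simp
  define c where "c = intersection_number A (A\<inverse>) A"
  have "intersection_number A (A\<inverse>) B = c"
  proof -
    have "(v, u) \<in> B" using uv conv by blast
    then have "intersection_number A (A\<inverse>) B = card (A``{v} \<inter> A``{u})"
      using card_Int_Image_eq_intersection_number[OF relations(1) relations(3)] by simp
    moreover have "c = card (A``{u} \<inter> A``{v})"
      using card_Int_Image_eq_intersection_number[OF relations(1) relations(1) uv] unfolding c_def by simp
    ultimately show ?thesis by (simp add: Int_commute)
  qed
  \<comment> \<open>\<open>A\<close> is a doubly regular tournament; count the common out-neighbours of \<open>x\<close> and \<open>x'\<close> over all \<open>x'\<close>.\<close>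
  then have "a * a = a + a * c + a * c"
    using sum_valency_intersection_number[OF fiber fiber in_rels_X(2)] conv b
    unfolding sum_rels_X valency_Id_on c_def a_def by (simp add: valency_def)
  moreover have "0 < a" using valency_pos[OF fiber in_rels_X(2)] unfolding a_def .
  moreover have "a * a = a * (1 + 2 * c) \<longleftrightarrow> a = 1 + 2 * c"
    using \<open>0 < a\<close> by (simp only: mult_cancel_left) simp
  ultimately have "a = 1 + 2 * c" by (simp add: algebra_simps)
  then show ?thesis using card_fiber b unfolding a_def by presburger
qed

lemma symmetric_if_card_mod_4: "card X mod 4 = 1 \<Longrightarrow> A\<inverse> = A"
  using converse_cases card_mod_4_if_converse_eq by fastforce

lemma strongly_regular:
  assumes "A\<inverse> = A"
  shows "strongly_regular X A (card X) (valency X A) (intersection_number A A A) (intersection_number A A B)"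
proof
  show "finite X" "card X = card X" "A \<subseteq> X \<times> X" "A\<inverse> = A" "(x, x) \<notin> A" for x
    using finite_X relations irreflexive assms by simp_all
  show "card (A``{x}) = valency X A" if "x \<in> X" for x
    using valency_eq_card_Image[OF fiber relations(1) that] by simp
  show "card (A``{x} \<inter> A``{y}) =
      (if (x, y) \<in> A then intersection_number A A A else intersection_number A A B)"
    if "x \<in> X" "y \<in> X" "x \<noteq> y" for x y
    using card_Int_Image_eq_intersection_number[OF relations(1) relations(1)]
      card_Int_Image_eq_intersection_number[OF relations(1) relations(3)]
      pair_cases[OF that(1,2)] that(3) assms by auto
qed

lemma conference_of_prime_card:
  assumes "CARD('t::finite) = card X" and "prime (card X)" and "card X mod 4 = 1"
  shows "A\<inverse> = A" and "2 * valency X A + 1 = card X"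
    and "valency X A = 2 * intersection_number A A B"
    and "intersection_number A A A + 1 = intersection_number A A B"
proof -
  show sym: "A\<inverse> = A" using symmetric_if_card_mod_4 assms(3) .
  interpret strongly_regular X A "card X" "valency X A" "intersection_number A A A" "intersection_number A A B"
    by (rule strongly_regular[OF sym])
  have "0 < valency X A" "0 < valency X B" using valency_pos[OF fiber] in_rels_X by auto
  moreover have "intersection_number A A B \<le> valency X A"
  proof -
    obtain u v where uv: "(u, v) \<in> B" "u \<in> X" using obtain_fiber_pair[OF fiber in_rels_X(3)] by blast
    then have "intersection_number A A B = card (A``{u} \<inter> A``{v})"
      using card_Int_Image_eq_intersection_number[OF relations(1) relations(3)] sym by simp
    also have "\<dots> \<le> card (A``{u})"
      using finite_X relations(2) by (intro card_mono) (auto intro: finite_subset)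
    finally show ?thesis using valency_eq_card_Image[OF fiber relations(1) uv(2)] by simp
  qed
  ultimately have "2 * valency X A + 1 = card X \<and> valency X A = 2 * intersection_number A A B
      \<and> intersection_number A A A + 1 = intersection_number A A B"
    using conference_of_prime_order[OF assms(1,2)] card_fiber by simp
  then show "2 * valency X A + 1 = card X" "valency X A = 2 * intersection_number A A B"
    "intersection_number A A A + 1 = intersection_number A A B" by simp_all
qed

lemma card_Int_Image_cases:
  assumes S: "S \<in> rels_between \<R> X Y" and x: "x \<in> X" "x' \<in> X"
  shows "card (S``{x} \<inter> S``{x'}) = (if x = x' then valency X S
    else if (x, x') \<in> A then intersection_number S (S\<inverse>) A else intersection_number S (S\<inverse>) B)"
  using pair_cases[OF x] valency_eq_card_Image[OF fiber rels_between_relation(1)[OF S] x(1)]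
    card_Int_Image_eq_intersection_number[OF rels_between_relation(1)[OF S]] relations A_B_disjoint
  by auto

lemma valency_square:
  assumes Y: "fiber \<R> Y" "card Y = card X" and S: "S \<in> rels_between \<R> X Y"
  shows "valency X S * valency X S = valency X S
    + valency X A * intersection_number S (S\<inverse>) A + valency X B * intersection_number S (S\<inverse>) B"
proof -
  have "0 < card X" using finite_X obtain_fiber_pair[OF fiber S] card_gt_0_iff by blast
  then have "valency Y (S\<inverse>) = valency X S"
    using card_mult_valency_converse[OF fiber Y(1) S] Y(2) by simp
  then show ?thesis
    using sum_valency_intersection_number[OF fiber Y(1) S]
    unfolding sum_rels_X valency_Id_on by (simp add: valency_def)
qed

lemma valency_cases_card_89:
  assumes X: "card X = 89" and Y: "fiber \<R> Y" "card Y = 89" and S: "S \<in> rels_between \<R> X Y"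
  shows "valency X S = 1 \<or> valency X S = 89 \<or> 11 dvd valency X S"
proof -
  have "prime (card X)" using X by (simp add: prime_nat_iff' atLeastLessThan_nat_numeral)
  note conference = conference_of_prime_card[where 't = 89, OF _ this] X
  interpret strongly_regular X A 89 44 21 22
    using strongly_regular[OF conference(1)] conference by simp
  have ab: "valency X A = 44" "valency X B = 44" using card_fiber conference by simp_all
  define d al be where "d = valency X S" and "al = intersection_number S (S\<inverse>) A"
    and "be = intersection_number S (S\<inverse>) B"
  have rows: "d * d = d + 44 * al + 44 * be"
    using valency_square[OF Y(1) _ S] X Y(2) ab unfolding d_def al_def be_def by simp
  have p: "44 * al = intersection_number A S S * d"
    using valency_mult_intersection_number[OF fiber Y(1) in_rels_X(2) S] ab
    unfolding d_def al_def by simp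
  have q: "44 * be = intersection_number B S S * d"
    using valency_mult_intersection_number[OF fiber Y(1) in_rels_X(3) S] ab
    unfolding d_def be_def by simp
  have gram: "adj_comb (real d - real be) (real al - real be) (real be) x x'
      = (\<Sum>y\<in>Y. of_bool ((x, y) \<in> S) * of_bool ((x', y) \<in> S))" if "x \<in> X" "x' \<in> X" for x x'
  proof -
    have "Y \<inter> {y. (x, y) \<in> S \<and> (x', y) \<in> S} = S``{x} \<inter> S``{x'}"
      using rels_between_relation(2)[OF S] by auto
    then show ?thesis
      using card_Int_Image_cases[OF S that] finite_fiber[OF Y(1)] A_B_disjoint irreflexive
      unfolding d_def al_def be_def adj_comb_def by (auto simp flip: of_bool_conj)
  qed
  have "real 89 * (real al - real be)\<^sup>2 \<le> (2 * (real d - real be) - (real al - real be))\<^sup>2"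
    by (rule conference_gram_bound[OF _ _ _ gram]) simp_all
  moreover have "2 * (real d - real be) - (real al - real be) = 2 * real d - real al - real be" by simp
  ultimately have bound: "real (2 * 44 + 1) * (real al - real be)\<^sup>2 \<le> (2 * real d - real al - real be)\<^sup>2"
    by simp
  have "0 < d" using valency_pos[OF fiber S] unfolding d_def .
  moreover have "d \<le> 89" using valency_le_card[OF fiber Y(1) S] Y(2) unfolding d_def by simp
  moreover note intersection_numbers_sum[OF \<open>0 < d\<close> rows p q]
  moreover have "89 * (int (intersection_number A S S) - int (intersection_number B S S))\<^sup>2 \<le> (89 - int d)\<^sup>2"
    using gram_bound_intersection_numbers[OF \<open>0 < d\<close> rows p q bound] by simp
  ultimately show ?thesis using valency_cases_89[OF _ _ _ p q] unfolding d_def by simp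
qed

end

lemma (in coherent) obtain_rank_three_fiber:
  assumes X: "fiber \<R> X" and rank: "card (rels_between \<R> X X) = 3"
  obtains A B where "rank_three_fiber V \<R> X A B"
proof -
  have Id: "Id_on X \<in> rels_between \<R> X X"
    using X unfolding fiber_def rels_between_def by auto
  then have "card (rels_between \<R> X X - {Id_on X}) = 2" using rank by (simp add: card_Diff_singleton)
  then obtain A B where "rels_between \<R> X X - {Id_on X} = {A, B}" by (auto simp: card_2_iff)
  then have "rels_between \<R> X X = {Id_on X, A, B}" using Id by blast
  then have "rank_three_fiber V \<R> X A B"
    using X rank coherent.intro[OF coherent]
    by (intro rank_three_fiber.intro rank_three_fiber_axioms.intro) simp_all
  then show thesis by (rule that)
qed

theorem proposition4p4:
  fixes V :: "'a set" and \<R> :: "('a \<times> 'a) set set" and X Y :: "'a set"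
    and m r :: nat and k :: real
  assumes "coherent_configuration V \<R>"
    and "fiber \<R> X" and "fiber \<R> Y"
    and "m = card X" and "m = card Y" and "prime m"
    and "r = card (rels_between \<R> X X)" and "r > 2"
    and "card (rels_between \<R> X Y) > 1"
    and "k = (real m - 1) / (real r - 1)"
    and "k = 44" and "m = 89"
  shows "1 \<in> {valency X S | S. S \<in> rels_between \<R> X Y}"
proof -
  interpret coherent V \<R> by unfold_locales (rule assms(1))
  have "real r - 1 = 2" using assms(8,10-12) by (simp add: field_simps)
  then obtain A B where "rank_three_fiber V \<R> X A B"
    using obtain_rank_three_fiber[OF assms(2)] assms(7) by auto
  then interpret rank_three_fiber V \<R> X A B .
  obtain x where "x \<in> X" using assms(4,12) by fastforce
  have "\<exists>S\<in>rels_between \<R> X Y. valency X S = 1"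
  proof (rule exists_summand_eq_one[OF finite_rels_between assms(9)])
    show "(\<Sum>S\<in>rels_between \<R> X Y. valency X S) = 89"
      using sum_valency_rels_between[OF assms(2,3) \<open>x \<in> X\<close>] assms(5,12) by simp
    show "valency X S = 1 \<or> valency X S = 89 \<or> 11 dvd valency X S" if "S \<in> rels_between \<R> X Y" for S
      using valency_cases_card_89[OF _ assms(3) _ that] assms(4,5,12) by simp
  qed (use valency_pos[OF assms(2)] in simp_all)
  then obtain S where "S \<in> rels_between \<R> X Y" "valency X S = 1" by blast
  then show ?thesis by (intro CollectI exI[of _ S]) simp
qed

end
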